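(* Suppose $a\in C^2(\mathbb{R})$. Let $\tilde\alpha\in\mathbb{R}^2$ be such that $a'(\tilde\alpha_2)>0$. Given $s_0,t_0>0$ sufficiently small depending on the function $a$ and $\tilde\alpha_2$, the matrix $A$ is invertible. Moreover, for any $0<\epsilon<1$, the unique solution $\gamma_0^{\epsilon}$ of the system \begin{equation*} L^{\epsilon}(\gamma) = 0 \end{equation*} is non-negative componentwise. Further, there exist constants $0<\lambda<\Lambda<\infty$ depending on the function $a$, $\tilde\alpha_2$, $s_0$ and $t_0$ such that \begin{equation*} \lambda\epsilon \leq[\gamma_0^{\epsilon}]_i \leq \Lambda\epsilon \ \text{ for }\ i=1,2,3,4. \end{equation*}
   Context: Let $a:\mathbb{R}\to\mathbb{R}$, $F(\xi)=\int_0^\xi a(s)\,ds$, and for $\alpha\in\mathbb{R}^2$ let $$P_1^{\alpha}(u,v):=\begin{pmatrix} u-\alpha_1 & v-\alpha_2 \\ a(v)-a(\alpha_2) & u-\alpha_1\\ (u-\alpha_1)(a(v)-a(\alpha_2)) & \frac{(u-\alpha_1)^2}{2}+F(v)-F(\alpha_2)-a(\alpha_2)(v-\alpha_2) \end{pmatrix}.$$ Given $s_0,t_0>0$ set $\zeta_1:=P_1^{\tilde\alpha}(\tilde\alpha_1+s_0,\tilde\alpha_2)$, $\zeta_2:=P_1^{\tilde\alpha}(\tilde\alpha_1-s_0,\tilde\alpha_2)$, $\zeta_3:=P_1^{\tilde\alpha}(\tilde\alpha_1,\tilde\alpha_2+t_0)$, $\zeta_4:=P_1^{\tilde\alpha}(\tilde\alpha_1,\tilde\alpha_2-t_0)$.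 Let $D_1,D_2,D_3$ denote the $(1,2)$, $(2,3)$, $(1,3)$ row-minors of a $3\times 2$ matrix, respectively. Let $A\in M^{4\times 4}$ be the matrix whose $j$-th column is $(D_1(\zeta_j),D_2(\zeta_j),D_3(\zeta_j),1)^T$ for $j=1,2,3,4$, and for $\epsilon>0$, $\gamma\in\mathbb{R}^4$ define $L^{\epsilon}(\gamma):=A\gamma-(0,0,0,\epsilon)^T$. *)

theory Defs
  imports "HOL-Analysis.Analysis"
begin

definition Fint :: "(real \<Rightarrow> real) \<Rightarrow> real \<Rightarrow> real" where
  "Fint a \<xi> = (if 0 \<le> \<xi> then integral {0..\<xi>} a else - integral {\<xi>..0} a)"

definition P1 :: "(real \<Rightarrow> real) \<Rightarrow> real^2 \<Rightarrow> real \<Rightarrow> real \<Rightarrow> real^2^3" where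
  "P1 a \<alpha> u v = vector [
     vector [u - \<alpha>$1, v - \<alpha>$2],
     vector [a v - a (\<alpha>$2), u - \<alpha>$1],
     vector [(u - \<alpha>$1) * (a v - a (\<alpha>$2)),
             (u - \<alpha>$1)^2 / 2 + Fint a v - Fint a (\<alpha>$2) - a (\<alpha>$2) * (v - \<alpha>$2)]]"

definition D1 :: "real^2^3 \<Rightarrow> real" where
  "D1 M = M$1$1 * M$2$2 - M$1$2 * M$2$1"
definition D2 :: "real^2^3 \<Rightarrow> real" where
  "D2 M = M$2$1 * M$3$2 - M$2$2 * M$3$1"
definition D3 :: "real^2^3 \<Rightarrow> real" where
  "D3 M = M$1$1 * M$3$2 - M$1$2 * M$3$1"

definition zeta :: "(real \<Rightarrow> real) \<Rightarrow> real^2 \<Rightarrow> real \<Rightarrow> real \<Rightarrow> 4 \<Rightarrow> real^2^3" where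
  "zeta a \<alpha> s0 t0 j =
     (if j = 1 then P1 a \<alpha> (\<alpha>$1 + s0) (\<alpha>$2)
      else if j = 2 then P1 a \<alpha> (\<alpha>$1 - s0) (\<alpha>$2)
      else if j = 3 then P1 a \<alpha> (\<alpha>$1) (\<alpha>$2 + t0)
      else P1 a \<alpha> (\<alpha>$1) (\<alpha>$2 - t0))"

definition Amat :: "(real \<Rightarrow> real) \<Rightarrow> real^2 \<Rightarrow> real \<Rightarrow> real \<Rightarrow> real^4^4" where
  "Amat a \<alpha> s0 t0 = (\<chi> i j. (vector [D1 (zeta a \<alpha> s0 t0 j), D2 (zeta a \<alpha> s0 t0 j),
                                  D3 (zeta a \<alpha> s0 t0 j), 1] :: real^4) $ i)"

definition Leps :: "(real \<Rightarrow> real) \<Rightarrow> real^2 \<Rightarrow> real \<Rightarrow> real \<Rightarrow> real \<Rightarrow> real^4 \<Rightarrow> real^4" where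
  "Leps a \<alpha> s0 t0 \<epsilon> \<gamma> = Amat a \<alpha> s0 t0 *v \<gamma> - vector [0, 0, 0, \<epsilon>]"

end

theory Submission
  imports Defs
begin

(* Write y = alpha_2. Since a'(y) > 0, a(y - h) < a(y) < a(y + h) for small h > 0, and comparing
   F with its tangent line at y then gives F(y + t) - F(y) - a(y) t > 0 and
   F(y - t) - F(y) + a(y) t > 0. With these signs, L^eps(gamma) = 0 is a 4x4 linear system whose
   solutions are exactly eps * w for one vector w with positive entries; invertibility of A (the
   case eps = 0) and the bounds lam * eps <= gamma_i <= Lam * eps are immediate from this. *)

lemma vector_4 [simp]:
  "(vector [w, x, y, z] :: 'a::zero^4) $ 1 = w"
  "(vector [w, x, y, z] :: 'a::zero^4) $ 2 = x"
  "(vector [w, x, y, z] :: 'a::zero^4) $ 3 = y"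
  "(vector [w, x, y, z] :: 'a::zero^4) $ 4 = z"
  unfolding vector_def by simp_all

lemma Fint_diff_eq_integral:
  assumes "continuous_on UNIV a" and "x \<le> y"
  shows "Fint a y - Fint a x = integral {x..y} a"
proof -
  have int: "\<And>u v. a integrable_on {u..v}"
    using assms(1) by (meson continuous_on_subset integrable_continuous_real subset_UNIV)
  consider "0 \<le> x" | "x < 0" "0 \<le> y" | "y < 0"
    using assms(2) by linarith
  then show ?thesis
  proof cases
    case 1
    then show ?thesis
      using Henstock_Kurzweil_Integration.integral_combine[where f = a and a = 0 and c = x and b = y]
        assms(2) int by (simp add: Fint_def)
  next
    case 2
    then show ?thesis
      using Henstock_Kurzweil_Integration.integral_combine[where f = a and a = x and c = 0 and b = y]
        int by (simp add: Fint_def)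
  next
    case 3
    then show ?thesis
      using Henstock_Kurzweil_Integration.integral_combine[where f = a and a = x and c = y and b = 0]
        assms(2) int by (simp add: Fint_def)
  qed
qed

lemma has_real_derivative_Fint:
  assumes "continuous_on UNIV a"
  shows "(Fint a has_real_derivative a x) (at x)"
proof -
  let ?g = "\<lambda>y. Fint a (x - 1) + integral {x - 1..y} a"
  have "((\<lambda>y. integral {x - 1..y} a) has_real_derivative a x) (at x within {x - 1..x + 1})"
    by (rule integral_has_real_derivative) (auto intro: continuous_on_subset[OF assms])
  then have "(?g has_real_derivative a x) (at x within {x - 1..x + 1})"
    using DERIV_add[OF DERIV_const[of "Fint a (x - 1)"]] by simp
  moreover have "x \<in> interior {x - 1..x + 1}"
    by simp
  ultimately have "(?g has_real_derivative a x) (at x)"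
    by (metis at_within_interior)
  then show ?thesis
  proof (rule has_field_derivative_transform_within_open[where S = "{x - 1<..<x + 1}"])
    fix y :: real
    assume "y \<in> {x - 1<..<x + 1}"
    then show "?g y = Fint a y"
      using Fint_diff_eq_integral[OF assms, of "x - 1" y] by simp
  qed auto
qed

lemma DERIV_gt_imp_above_tangent_right:
  fixes F f :: "real \<Rightarrow> real"
  assumes F: "\<And>x. (F has_real_derivative f x) (at x)" and "y < z"
    and "\<And>x. y < x \<Longrightarrow> x < z \<Longrightarrow> f y < f x"
  shows "F y + f y * (z - y) < F z"
proof -
  define g where "g x = F x - f y * x" for x
  have g: "(g has_real_derivative f x - f y) (at x)" for x
    unfolding g_def using F by (auto intro!: derivative_eq_intros)
  have "continuous_on {y..z} g"
    using g by (intro DERIV_atLeastAtMost_imp_continuous_on) blast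
  then have "g y < g z"
  proof (rule DERIV_pos_imp_increasing_open[OF assms(2), rotated])
    fix x assume "y < x" "x < z"
    then show "\<exists>d. DERIV g x :> d \<and> 0 < d"
      using g assms(3) by (intro exI[of _ "f x - f y"]) simp
  qed
  then show ?thesis unfolding g_def by (simp add: algebra_simps)
qed

lemma DERIV_lt_imp_above_tangent_left:
  fixes F f :: "real \<Rightarrow> real"
  assumes F: "\<And>x. (F has_real_derivative f x) (at x)" and "z < y"
    and "\<And>x. z < x \<Longrightarrow> x < y \<Longrightarrow> f x < f y"
  shows "F y + f y * (z - y) < F z"
proof -
  define g where "g x = F x - f y * x" for x
  have g: "(g has_real_derivative f x - f y) (at x)" for x
    unfolding g_def using F by (auto intro!: derivative_eq_intros)
  have "continuous_on {z..y} g"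
    using g by (intro DERIV_atLeastAtMost_imp_continuous_on) blast
  then have "g z > g y"
  proof (rule DERIV_neg_imp_decreasing_open[OF assms(2), rotated])
    fix x assume "z < x" "x < y"
    then show "\<exists>d. DERIV g x :> d \<and> d < 0"
      using g assms(3) by (intro exI[of _ "f x - f y"]) simp
  qed
  then show ?thesis unfolding g_def by (simp add: algebra_simps)
qed

lemma positive_vector_bounds:
  fixes w :: "real^'n"
  assumes "\<And>i. 0 < w $ i"
  obtains lam Lam where "0 < lam" "lam < Lam" "\<And>i. lam \<le> w $ i \<and> w $ i \<le> Lam"
proof -
  let ?W = "range (\<lambda>i. w $ i)"
  have bounds: "Min ?W \<le> w $ i" "w $ i \<le> Max ?W" for i
    by (intro Min_le Max_ge; simp)+
  show ?thesis
  proof (rule that[of "Min ?W" "Max ?W + 1"])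
    show "0 < Min ?W"
      using assms by (subst Min_gr_iff) auto
    show "Min ?W < Max ?W + 1"
      using bounds[of undefined] by linarith
    show "Min ?W \<le> w $ i \<and> w $ i \<le> Max ?W + 1" for i
      using bounds[of i] by linarith
  qed
qed

lemma linear_system_unique_solution:
  fixes c r p q G H :: real
  assumes c: "c > 0" and r: "r > 0" and p: "p > 0" and q: "q < 0" and G: "G > 0" and H: "H > 0"
  obtains k m N :: real where "0 < k" "0 < m" "0 < N"
    and "\<And>x1 x2 x3 x4 e. c * (x1 + x2) = r * (p * x3 - q * x4) \<and> p * G * x3 + q * H * x4 = 0 \<and>
          x1 = x2 \<and> x1 + x2 + x3 + x4 = e \<longleftrightarrow>
         x1 = e * m / N \<and> x2 = e * m / N \<and> x3 = e / N \<and> x4 = e * k / N"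
proof -
  define k where "k = p * G / (- q * H)"
  define m where "m = r * (p - q * k) / (2 * c)"
  define N where "N = 2 * m + 1 + k"
  have k_pos: "0 < k" unfolding k_def using p q G H by (intro divide_pos_pos mult_pos_pos) auto
  then have "q * k < 0" using q by (simp add: mult_neg_pos)
  then have "0 < p - q * k" using p by simp
  then have m_pos: "0 < m" unfolding m_def using c r by simp
  then have N_pos: "0 < N" unfolding N_def using k_pos by simp
  have qHk: "q * H * k = - (p * G)" unfolding k_def using q H by (simp add: field_simps)
  have cm: "2 * c * m = r * (p - q * k)" unfolding m_def using c by simp
  show ?thesis
  proof (rule that[OF k_pos m_pos N_pos], rule iffI)
    fix x1 x2 x3 x4 e :: real
    assume "c * (x1 + x2) = r * (p * x3 - q * x4) \<and> p * G * x3 + q * H * x4 = 0 \<and>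
          x1 = x2 \<and> x1 + x2 + x3 + x4 = e"
    then have eq1: "c * (x1 + x2) = r * (p * x3 - q * x4)" and eq2: "p * G * x3 + q * H * x4 = 0"
      and x2: "x2 = x1" and sum: "x1 + x2 + x3 + x4 = e"
      by auto
    have "q * H * x4 = - (p * G) * x3" using eq2 by (simp add: algebra_simps)
    also have "\<dots> = q * H * (k * x3)" by (simp add: qHk[symmetric])
    finally have x4: "x4 = k * x3" using q H by simp
    have "2 * c * x1 = r * (p * x3 - q * x4)" using eq1 x2 by simp
    also have "\<dots> = r * (p - q * k) * x3" using x4 by (simp add: algebra_simps)
    also have "\<dots> = 2 * c * (m * x3)" by (simp add: cm[symmetric])
    finally have x1: "x1 = m * x3" using c by simp
    have "x3 * N = e" using sum x1 x2 x4 unfolding N_def by (simp add: algebra_simps)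
    then have "x3 = e / N" using N_pos by (simp add: field_simps)
    then show "x1 = e * m / N \<and> x2 = e * m / N \<and> x3 = e / N \<and> x4 = e * k / N"
      using x1 x2 x4 by simp
  next
    fix x1 x2 x3 x4 e :: real
    assume h: "x1 = e * m / N \<and> x2 = e * m / N \<and> x3 = e / N \<and> x4 = e * k / N"
    have "c * (x1 + x2) - r * (p * x3 - q * x4) = e / N * (2 * c * m - r * (p - q * k))"
      using h by (simp add: algebra_simps)
    moreover have "p * G * x3 + q * H * x4 = e / N * (p * G + q * H * k)"
      using h by (simp add: algebra_simps)
    moreover have "x1 + x2 + x3 + x4 = e / N * N"
      using h unfolding N_def by (simp add: algebra_simps add_divide_distrib)
    ultimately show "c * (x1 + x2) = r * (p * x3 - q * x4) \<and> p * G * x3 + q * H * x4 = 0 \<and>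
          x1 = x2 \<and> x1 + x2 + x3 + x4 = e"
      using h cm qHk N_pos by simp
  qed
qed

lemma Leps_eq_zero_iff:
  fixes a :: "real \<Rightarrow> real" and \<alpha> :: "real^2" and s t e :: real and \<gamma> :: "real^4"
  assumes "s \<noteq> 0"
  defines "y \<equiv> \<alpha>$2"
  defines "p \<equiv> a (y + t) - a y" and "q \<equiv> a (y - t) - a y"
    and "G \<equiv> Fint a (y + t) - Fint a y - a y * t"
    and "H \<equiv> Fint a (y - t) - Fint a y + a y * t"
  shows "Leps a \<alpha> s t e \<gamma> = 0 \<longleftrightarrow>
    s\<^sup>2 * (\<gamma>$1 + \<gamma>$2) = t * (p * \<gamma>$3 - q * \<gamma>$4) \<and> p * G * \<gamma>$3 + q * H * \<gamma>$4 = 0 \<and>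
    \<gamma>$1 = \<gamma>$2 \<and> \<gamma>$1 + \<gamma>$2 + \<gamma>$3 + \<gamma>$4 = e"
proof -
  have "s ^ 3 / 2 \<noteq> 0" using assms(1) by simp
  then show ?thesis
    unfolding Leps_def Amat_def zeta_def P1_def D1_def D2_def D3_def assms(2-6)
    by (simp add: vec_eq_iff forall_4 sum_4 matrix_vector_mult_def algebra_simps
        power2_eq_square power3_eq_cube)
qed

lemma Leps_eq_zero_iff_scaleR:
  fixes a :: "real \<Rightarrow> real" and \<alpha> :: "real^2" and s t :: real
  assumes a: "continuous_on UNIV a" and s: "0 < s" and t: "0 < t"
    and mono: "\<And>h. 0 < h \<Longrightarrow> h \<le> t \<Longrightarrow> a (\<alpha>$2 - h) < a (\<alpha>$2) \<and> a (\<alpha>$2) < a (\<alpha>$2 + h)"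
  obtains w :: "real^4" where "\<And>i. 0 < w $ i" and "\<And>e \<gamma>. Leps a \<alpha> s t e \<gamma> = 0 \<longleftrightarrow> \<gamma> = e *\<^sub>R w"
proof -
  define y where "y = \<alpha>$2"
  have F: "\<And>x. (Fint a has_real_derivative a x) (at x)"
    by (rule has_real_derivative_Fint[OF a])
  have p: "0 < a (y + t) - a y" and q: "a (y - t) - a y < 0"
    using mono[OF t] unfolding y_def by auto
  have "Fint a y + a y * (y + t - y) < Fint a (y + t)"
  proof (rule DERIV_gt_imp_above_tangent_right[OF F])
    fix x assume "y < x" "x < y + t"
    then show "a y < a x" using mono[of "x - y"] unfolding y_def by auto
  qed (use t in simp)
  then have G: "0 < Fint a (y + t) - Fint a y - a y * t" by simp
  have "Fint a y + a y * (y - t - y) < Fint a (y - t)"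
  proof (rule DERIV_lt_imp_above_tangent_left[OF F])
    fix x assume "y - t < x" "x < y"
    then show "a x < a y" using mono[of "y - x"] unfolding y_def by auto
  qed (use t in simp)
  then have H: "0 < Fint a (y - t) - Fint a y + a y * t" by simp
  have s_nz: "s \<noteq> 0" using s by simp
  have "0 < s\<^sup>2" using s by simp
  from linear_system_unique_solution[OF this t p q G H]
  obtain k m N where pos: "0 < k" "0 < m" "0 < N" and sol: "\<And>x1 x2 x3 x4 e.
      s\<^sup>2 * (x1 + x2) = t * ((a (y + t) - a y) * x3 - (a (y - t) - a y) * x4) \<and>
      (a (y + t) - a y) * (Fint a (y + t) - Fint a y - a y * t) * x3 +
      (a (y - t) - a y) * (Fint a (y - t) - Fint a y + a y * t) * x4 = 0 \<and>
      x1 = x2 \<and> x1 + x2 + x3 + x4 = e \<longleftrightarrow>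
      x1 = e * m / N \<and> x2 = e * m / N \<and> x3 = e / N \<and> x4 = e * k / N"
    by blast
  show ?thesis
  proof (rule that[of "vector [m / N, m / N, 1 / N, k / N]"])
    show "0 < vector [m / N, m / N, 1 / N, k / N] $ i" for i :: 4
      using pos exhaust_4[of i] by auto
    show "Leps a \<alpha> s t e \<gamma> = 0 \<longleftrightarrow> \<gamma> = e *\<^sub>R vector [m / N, m / N, 1 / N, k / N]" for e \<gamma>
      unfolding Leps_eq_zero_iff[OF s_nz] y_def[symmetric] sol
      by (auto simp: vec_eq_iff forall_4)
  qed
qed

lemma Leps_solution_properties:
  assumes "\<exists>w. (\<forall>i. 0 < w $ i) \<and> (\<forall>e \<gamma>. Leps a \<alpha> s t e \<gamma> = 0 \<longleftrightarrow> \<gamma> = e *\<^sub>R w)"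
  shows "invertible (Amat a \<alpha> s t) \<and>
           (\<forall>\<epsilon>. 0 < \<epsilon> \<and> \<epsilon> < 1 \<longrightarrow> (\<exists>!\<gamma>. Leps a \<alpha> s t \<epsilon> \<gamma> = 0)) \<and>
           (\<forall>\<epsilon> \<gamma>. 0 < \<epsilon> \<and> \<epsilon> < 1 \<and> Leps a \<alpha> s t \<epsilon> \<gamma> = 0 \<longrightarrow> (\<forall>i. 0 \<le> \<gamma>$i)) \<and>
           (\<exists>lam Lam. 0 < lam \<and> lam < Lam \<and>
              (\<forall>\<epsilon> \<gamma>. 0 < \<epsilon> \<and> \<epsilon> < 1 \<and> Leps a \<alpha> s t \<epsilon> \<gamma> = 0 \<longrightarrow>
                 (\<forall>i. lam * \<epsilon> \<le> \<gamma>$i \<and> \<gamma>$i \<le> Lam * \<epsilon>)))"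
proof -
  obtain w :: "real^4" where w_pos: "\<And>i. 0 < w $ i"
    and sol: "\<And>e \<gamma>. Leps a \<alpha> s t e \<gamma> = 0 \<longleftrightarrow> \<gamma> = e *\<^sub>R w"
    using assms by blast
  have "Amat a \<alpha> s t *v \<gamma> = 0 \<longleftrightarrow> \<gamma> = 0" for \<gamma>
    using sol[of 0 \<gamma>] by (simp add: Leps_def vec_eq_iff forall_4)
  then have inv: "invertible (Amat a \<alpha> s t)"
    by (simp add: invertible_left_inverse matrix_left_invertible_ker)
  have uniq: "\<forall>\<epsilon>. 0 < \<epsilon> \<and> \<epsilon> < 1 \<longrightarrow> (\<exists>!\<gamma>. Leps a \<alpha> s t \<epsilon> \<gamma> = 0)"
    by (simp add: sol)
  have nonneg: "\<forall>\<epsilon> \<gamma>. 0 < \<epsilon> \<and> \<epsilon> < 1 \<and> Leps a \<alpha> s t \<epsilon> \<gamma> = 0 \<longrightarrow> (\<forall>i. 0 \<le> \<gamma>$i)"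
    using w_pos by (simp add: sol less_imp_le)
  obtain lam Lam where "0 < lam" "lam < Lam" and bounds: "\<And>i. lam \<le> w $ i \<and> w $ i \<le> Lam"
    using positive_vector_bounds[OF w_pos] by blast
  have "lam * \<epsilon> \<le> \<gamma>$i \<and> \<gamma>$i \<le> Lam * \<epsilon>" if "0 < \<epsilon>" "Leps a \<alpha> s t \<epsilon> \<gamma> = 0" for \<epsilon> \<gamma> i
  proof -
    have "\<gamma>$i = w$i * \<epsilon>" using that(2) by (simp add: sol)
    then show ?thesis using bounds[of i] that(1) by (simp add: mult_right_mono)
  qed
  with \<open>0 < lam\<close> \<open>lam < Lam\<close> have "\<exists>lam Lam. 0 < lam \<and> lam < Lam \<and>
      (\<forall>\<epsilon> \<gamma>. 0 < \<epsilon> \<and> \<epsilon> < 1 \<and> Leps a \<alpha> s t \<epsilon> \<gamma> = 0 \<longrightarrow>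
         (\<forall>i. lam * \<epsilon> \<le> \<gamma>$i \<and> \<gamma>$i \<le> Lam * \<epsilon>))"
    by blast
  with inv uniq nonneg show ?thesis by blast
qed

theorem lemma16:
  fixes a :: "real \<Rightarrow> real" and \<alpha> :: "real^2"
  assumes "a differentiable_on UNIV"
    and "deriv a differentiable_on UNIV"
    and "continuous_on UNIV (deriv (deriv a))"
    and "deriv a (\<alpha>$2) > 0"
  shows "\<exists>\<delta>>0. \<forall>s0 t0. 0 < s0 \<and> s0 < \<delta> \<and> 0 < t0 \<and> t0 < \<delta> \<longrightarrow>
           invertible (Amat a \<alpha> s0 t0) \<and>
           (\<forall>\<epsilon>. 0 < \<epsilon> \<and> \<epsilon> < 1 \<longrightarrow> (\<exists>!\<gamma>. Leps a \<alpha> s0 t0 \<epsilon> \<gamma> = 0)) \<and>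
           (\<forall>\<epsilon> \<gamma>. 0 < \<epsilon> \<and> \<epsilon> < 1 \<and> Leps a \<alpha> s0 t0 \<epsilon> \<gamma> = 0 \<longrightarrow> (\<forall>i. 0 \<le> \<gamma>$i)) \<and>
           (\<exists>lam Lam. 0 < lam \<and> lam < Lam \<and>
              (\<forall>\<epsilon> \<gamma>. 0 < \<epsilon> \<and> \<epsilon> < 1 \<and> Leps a \<alpha> s0 t0 \<epsilon> \<gamma> = 0 \<longrightarrow>
                 (\<forall>i. lam * \<epsilon> \<le> \<gamma>$i \<and> \<gamma>$i \<le> Lam * \<epsilon>)))"
proof -
  have a: "continuous_on UNIV a"
    using assms(1) by (rule differentiable_imp_continuous_on)
  have a': "DERIV a (\<alpha>$2) :> deriv a (\<alpha>$2)"
    using assms(1) by (simp add: DERIV_deriv_iff_real_differentiable differentiable_on_def)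
  obtain d1 where "0 < d1" and right: "\<forall>h>0. h < d1 \<longrightarrow> a (\<alpha>$2) < a (\<alpha>$2 + h)"
    using DERIV_pos_inc_right[OF a' assms(4)] by blast
  obtain d2 where "0 < d2" and left: "\<forall>h>0. h < d2 \<longrightarrow> a (\<alpha>$2 - h) < a (\<alpha>$2)"
    using DERIV_pos_inc_left[OF a' assms(4)] by blast
  have solution_ray: "\<exists>w. (\<forall>i. 0 < w $ i) \<and> (\<forall>e \<gamma>. Leps a \<alpha> s t e \<gamma> = 0 \<longleftrightarrow> \<gamma> = e *\<^sub>R w)"
    if "0 < s" "0 < t" "t < min d1 d2" for s t
  proof (rule Leps_eq_zero_iff_scaleR[OF a that(1,2)])
    show "a (\<alpha>$2 - h) < a (\<alpha>$2) \<and> a (\<alpha>$2) < a (\<alpha>$2 + h)" if "0 < h" "h \<le> t" for h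
      using left right that \<open>t < min d1 d2\<close> by simp
  qed blast
  show ?thesis
  proof (intro exI[of _ "min d1 d2"] conjI[OF _ allI[OF allI[OF impI]]])
    show "0 < min d1 d2" using \<open>0 < d1\<close> \<open>0 < d2\<close> by simp
  qed (rule Leps_solution_properties, rule solution_ray; simp)
qed

end
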